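(* The functor $\epsilon:\mathcal{T}_q\to\mathcal{E}^f$ is full: for any two finite-dimensional non-degenerate quadratic spaces $V,W$ over $\mathbb{F}_2$ and any linear map $f:V\to W$ of underlying vector spaces, there exists a morphism $T\in\mathrm{Hom}_{\mathcal{T}_q}(V,W)$ of the form $T=[V\xrightarrow{\varphi}W\perp Y\hookleftarrow W]$ with $\epsilon(T)=f$.
   Context: All vector spaces are over $\mathbb{F}_2$; $\mathcal{E}^f$ is the category of finite-dimensional vector spaces. A quadratic form on $V$ is $q:V\to\mathbb{F}_2$ with $B(x,y)=q(x+y)+q(x)+q(y)$ bilinear; non-degenerate means $B$ has trivial radical. $\mathcal{E}_q$: objects non-degenerate finite-dimensional quadratic spaces, morphisms linear maps preserving $q$. Pseudo push-out of $f:V\to W=f(V)\perp V'$ and $g:V\to X=g(V)\perp V''$: the space $V\perp V'\perp V''$ with maps $f(v)+v'\mapsto v+v'$ and $g(v)+v''\mapsto v+v''$. $\mathcal{T}_q$: same objects as $\mathcal{E}_q$; morphisms $V\to W$ are classes of diagrams $[V\xrightarrow{f}X\xleftarrow{g}W]$ in $\mathcal{E}_q$ modulo the equivalence relation generated by existence of an $\mathcal{E}_q$-morphism $X_1\to X_2$ compatible with both legs; composition uses the pseudo push-out. $\epsilon:\mathcal{T}_q\to\mathcal{E}^f$ is the identity on underlying spaces and sends $[V\xrightarrow{f}X\xleftarrow{g}W]$ to $p_g\circ f$, where $p_g:X=g(W)\perp g(W)^\perp\to W$ is orthogonal projection onto $g(W)$ followed by $g^{-1}$. *)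

theory Defs
  imports Main "HOL-Library.Z2" "HOL-Library.Function_Algebras" "HOL-Library.Product_Plus"
begin

text \<open>Finite-dimensional vector spaces over F2, presented as carrier sets S inside an
  ambient abelian group: a subset containing 0, closed under addition, with x + x = 0
  (scalar multiplication by 0 and 1 is then determined). Finite-dimensional over F2
  is the same as finite.\<close>

definition f2space :: "'a::ab_group_add set \<Rightarrow> bool" where
  "f2space S \<longleftrightarrow> 0 \<in> S \<and> (\<forall>x\<in>S. \<forall>y\<in>S. x + y \<in> S) \<and> (\<forall>x\<in>S. x + x = 0) \<and> finite S"

definition f2linear :: "'a::ab_group_add set \<Rightarrow> 'b::ab_group_add set \<Rightarrow> ('a \<Rightarrow> 'b) \<Rightarrow> bool" where
  "f2linear S T f \<longleftrightarrow> (\<forall>x\<in>S. f x \<in> T) \<and> (\<forall>x\<in>S. \<forall>y\<in>S. f (x + y) = f x + f y)"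

definition polar :: "('a::ab_group_add \<Rightarrow> bit) \<Rightarrow> 'a \<Rightarrow> 'a \<Rightarrow> bit" where
  "polar q x y = q (x + y) + q x + q y"

definition quadratic_form :: "'a::ab_group_add set \<Rightarrow> ('a \<Rightarrow> bit) \<Rightarrow> bool" where
  "quadratic_form S q \<longleftrightarrow> f2space S \<and>
     (\<forall>x\<in>S. \<forall>y\<in>S. \<forall>z\<in>S. polar q (x + y) z = polar q x z + polar q y z) \<and>
     (\<forall>x\<in>S. \<forall>y\<in>S. \<forall>z\<in>S. polar q x (y + z) = polar q x y + polar q x z)"

definition nondegenerate :: "'a::ab_group_add set \<Rightarrow> ('a \<Rightarrow> bit) \<Rightarrow> bool" where
  "nondegenerate S q \<longleftrightarrow> (\<forall>x\<in>S. (\<forall>y\<in>S. polar q x y = 0) \<longrightarrow> x = 0)"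

definition quad_space :: "'a::ab_group_add set \<Rightarrow> ('a \<Rightarrow> bit) \<Rightarrow> bool" where
  "quad_space S q \<longleftrightarrow> quadratic_form S q \<and> nondegenerate S q"

definition Eq_morphism :: "'a::ab_group_add set \<Rightarrow> ('a \<Rightarrow> bit) \<Rightarrow> 'b::ab_group_add set \<Rightarrow> ('b \<Rightarrow> bit) \<Rightarrow> ('a \<Rightarrow> 'b) \<Rightarrow> bool" where
  "Eq_morphism S q T r f \<longleftrightarrow> f2linear S T f \<and> (\<forall>x\<in>S. r (f x) = q x)"

definition orth_form :: "('a \<Rightarrow> bit) \<Rightarrow> ('b \<Rightarrow> bit) \<Rightarrow> 'a \<times> 'b \<Rightarrow> bit" where
  "orth_form qW qY p = qW (fst p) + qY (snd p)"

text \<open>p_g : X = g(W) \<perp> g(W)^\<perp> \<rightarrow> W, orthogonal projection onto g(W) followed by g^-1: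
  p_g x is the unique w in W with x - g w orthogonal (w.r.t. the polar form of X) to g(W).\<close>
definition proj_g :: "('x::ab_group_add \<Rightarrow> bit) \<Rightarrow> 'w set \<Rightarrow> ('w \<Rightarrow> 'x) \<Rightarrow> 'x \<Rightarrow> 'w" where
  "proj_g qX W g x = (THE w. w \<in> W \<and> (\<forall>u\<in>W. polar qX (x - g w) (g u) = 0))"

text \<open>The functor epsilon on a representative diagram [V -f-> X <-g- W]: p_g \<circ> f.\<close>
definition eps_rep :: "('x::ab_group_add \<Rightarrow> bit) \<Rightarrow> 'w set \<Rightarrow> ('v \<Rightarrow> 'x) \<Rightarrow> ('w \<Rightarrow> 'x) \<Rightarrow> 'v \<Rightarrow> 'w" where
  "eps_rep qX W f g = proj_g qX W g \<circ> f"

end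

theory Submission
  imports Defs "HOL-Library.Countable_Set"
begin

(* Send v to (f v, \<psi> v), where \<psi> embeds V, equipped with the possibly degenerate form
   qV + qW o f, isometrically into a non-degenerate space Y: then (f v, \<psi> v) has form
   qW (f v) + qV v + qW (f v) = qV v, and since W and Y are orthogonal its projection onto W is f v.
   A quadratic form d on a non-degenerate space (V, q) embeds by v |-> (v, 0) into V \<times> V with the
   metabolic form (v, w) |-> d v + B_q(v, w), which is non-degenerate because B_q pairs the two
   factors perfectly. Finally, any non-degenerate space S is realised inside nat => bit by
   x |-> (B(x, x_n))_n for an enumeration (x_n) of S, which is injective by non-degeneracy. *)

(* Keep sums in bit as sums: add_ac and the two cancellation rules below normalise them. *)
declare add_bit_eq_xor [simp del]

lemma bit_add_self [simp]: "(a::bit) + a = 0"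
  by (cases a) auto

lemma bit_add_self_left [simp]: "(a::bit) + (a + b) = b"
  by (cases a; cases b) auto

lemma f2space_zero: "f2space S \<Longrightarrow> 0 \<in> S"
  by (simp add: f2space_def)

lemma f2space_add: "f2space S \<Longrightarrow> x \<in> S \<Longrightarrow> y \<in> S \<Longrightarrow> x + y \<in> S"
  by (simp add: f2space_def)

lemma f2space_add_self: "f2space S \<Longrightarrow> x \<in> S \<Longrightarrow> x + x = 0"
  by (simp add: f2space_def)

lemma f2space_finite: "f2space S \<Longrightarrow> finite S"
  by (simp add: f2space_def)

lemma f2space_minus: "f2space S \<Longrightarrow> x \<in> S \<Longrightarrow> - x = x"
  by (metis f2space_add_self minus_unique)

lemma f2space_diff: "f2space S \<Longrightarrow> x \<in> S \<Longrightarrow> y \<in> S \<Longrightarrow> x - y \<in> S"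
  by (simp add: diff_conv_add_uminus f2space_add f2space_minus)

lemma f2space_Times: "f2space S \<Longrightarrow> f2space T \<Longrightarrow> f2space (S \<times> T)"
  by (auto simp: f2space_def zero_prod_def)

lemma f2linear_mem: "f2linear S T f \<Longrightarrow> x \<in> S \<Longrightarrow> f x \<in> T"
  by (simp add: f2linear_def)

lemma f2linear_add: "f2linear S T f \<Longrightarrow> x \<in> S \<Longrightarrow> y \<in> S \<Longrightarrow> f (x + y) = f x + f y"
  by (simp add: f2linear_def)

lemma polar_commute: "polar q x y = polar q y x"
  by (simp add: polar_def add_ac)

lemma polar_zero_left [simp]: "polar q 0 y = q 0"
  by (simp add: polar_def add_ac)

lemma polar_zero_right [simp]: "polar q x 0 = q 0"
  by (simp add: polar_def add_ac)

lemma polar_plus: "polar (\<lambda>x. a x + b x) x y = polar a x y + polar b x y"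
  by (simp add: polar_def add_ac)

lemma polar_comp_additive:
  "f (x + y) = f x + f y \<Longrightarrow> polar (\<lambda>x. q (f x)) x y = polar q (f x) (f y)"
  by (simp add: polar_def)

lemma quadratic_form_f2space: "quadratic_form S q \<Longrightarrow> f2space S"
  by (simp add: quadratic_form_def)

lemma polar_add_left:
  "quadratic_form S q \<Longrightarrow> x \<in> S \<Longrightarrow> y \<in> S \<Longrightarrow> z \<in> S \<Longrightarrow>
    polar q (x + y) z = polar q x z + polar q y z"
  by (simp add: quadratic_form_def)

lemma polar_add_right:
  "quadratic_form S q \<Longrightarrow> x \<in> S \<Longrightarrow> y \<in> S \<Longrightarrow> z \<in> S \<Longrightarrow>
    polar q x (y + z) = polar q x y + polar q x z"
  by (simp add: quadratic_form_def)

lemma quadratic_form_zero: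
  assumes "quadratic_form S q"
  shows "q 0 = 0"
proof -
  have "0 \<in> S"
    using assms by (simp add: quadratic_form_f2space f2space_zero)
  then have "polar q (0 + 0) 0 = polar q 0 0 + polar q 0 0"
    by (intro polar_add_left[OF assms])
  then show ?thesis
    by simp
qed

lemma quadratic_form_plus:
  assumes "quadratic_form S a" "quadratic_form S b"
  shows "quadratic_form S (\<lambda>x. a x + b x)"
  using assms by (simp add: quadratic_form_def polar_plus add_ac)

lemma quadratic_form_comp_f2linear:
  assumes "quadratic_form T q" "f2space S" "f2linear S T f"
  shows "quadratic_form S (\<lambda>x. q (f x))"
  using assms by (simp add: quadratic_form_def polar_comp_additive f2linear_add f2linear_mem
      f2space_add)

lemma quad_space_quadratic_form: "quad_space S q \<Longrightarrow> quadratic_form S q"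
  by (simp add: quad_space_def)

lemma quad_space_nondegenerate:
  "quad_space S q \<Longrightarrow> x \<in> S \<Longrightarrow> (\<And>y. y \<in> S \<Longrightarrow> polar q x y = 0) \<Longrightarrow> x = 0"
  by (simp add: quad_space_def nondegenerate_def)

lemma quad_space_image:
  assumes S: "quad_space S q"
    and additive: "\<And>x y. x \<in> S \<Longrightarrow> y \<in> S \<Longrightarrow> \<iota> (x + y) = \<iota> x + \<iota> y"
    and inj: "inj_on \<iota> S"
  shows "quad_space (\<iota> ` S) (\<lambda>y. q (inv_into S \<iota> y))"
proof -
  let ?r = "\<lambda>y. q (inv_into S \<iota> y)"
  have Q: "quadratic_form S q" and F: "f2space S"
    using S quad_space_quadratic_form quadratic_form_f2space by blast+
  have "\<iota> 0 = \<iota> 0 + \<iota> 0"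
    using additive[of 0 0] F by (simp add: f2space_zero)
  then have \<iota>_zero: "\<iota> 0 = 0"
    by simp
  have polar_image: "polar ?r (\<iota> x) (\<iota> y) = polar q x y" if "x \<in> S" "y \<in> S" for x y
    using that inj by (simp add: polar_def additive[symmetric] f2space_add[OF F])
  show ?thesis
    unfolding quad_space_def quadratic_form_def f2space_def nondegenerate_def
  proof (intro conjI)
    show "0 \<in> \<iota> ` S"
      using F \<iota>_zero by (metis f2space_zero image_eqI)
    show "finite (\<iota> ` S)"
      using F by (simp add: f2space_finite)
    show "\<forall>x\<in>\<iota> ` S. (\<forall>y\<in>\<iota> ` S. polar ?r x y = 0) \<longrightarrow> x = 0"
      using quad_space_nondegenerate[OF S] \<iota>_zero by (auto simp: polar_image)
  qed (use F Q \<iota>_zero in \<open>auto simp: additive[symmetric] polar_image f2space_add f2space_add_self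
      polar_add_left polar_add_right\<close>)
qed

lemma quad_space_embedding_nat_bit:
  assumes S: "quad_space S q"
  shows "\<exists>(Y :: (nat \<Rightarrow> bit) set) qY \<iota>. quad_space Y qY \<and> Eq_morphism S q Y qY \<iota>"
proof -
  have Q: "quadratic_form S q" and F: "f2space S"
    using S quad_space_quadratic_form quadratic_form_f2space by blast+
  define xs where "xs = from_nat_into S"
  have xs: "range xs = S"
    unfolding xs_def using F f2space_zero f2space_finite
    by (intro range_from_nat_into countable_finite) blast+
  define \<iota> :: "_ \<Rightarrow> nat \<Rightarrow> bit" where "\<iota> x = (\<lambda>n. polar q x (xs n))" for x
  have additive: "\<iota> (x + y) = \<iota> x + \<iota> y" if "x \<in> S" "y \<in> S" for x y
    using that xs by (auto simp: \<iota>_def fun_eq_iff polar_add_left[OF Q])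
  have "inj_on \<iota> S"
  proof (rule inj_onI)
    fix x y assume x: "x \<in> S" and y: "y \<in> S" and eq: "\<iota> x = \<iota> y"
    have "polar q (x + y) z = 0" if "z \<in> S" for z
    proof -
      obtain n where "z = xs n"
        using \<open>z \<in> S\<close> xs by blast
      then show ?thesis
        using eq x y that by (simp add: polar_add_left[OF Q] \<iota>_def fun_eq_iff)
    qed
    then have "x + y = 0"
      using S F x y by (blast intro: quad_space_nondegenerate f2space_add)
    then show "x = y"
      using F x by (simp add: add_eq_0_iff f2space_minus)
  qed
  with S additive have "quad_space (\<iota> ` S) (\<lambda>y. q (inv_into S \<iota> y))"
    by (rule quad_space_image)
  moreover have "Eq_morphism S q (\<iota> ` S) (\<lambda>y. q (inv_into S \<iota> y)) \<iota>"
    using \<open>inj_on \<iota> S\<close> additive by (simp add: Eq_morphism_def f2linear_def)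
  ultimately show ?thesis
    by blast
qed

definition metabolic_form :: "('a \<Rightarrow> bit) \<Rightarrow> ('a::ab_group_add \<Rightarrow> bit) \<Rightarrow> 'a \<times> 'a \<Rightarrow> bit" where
  "metabolic_form d q p = d (fst p) + polar q (fst p) (snd p)"

lemma polar_metabolic_form:
  assumes Q: "quadratic_form V q" and "v \<in> V" "w \<in> V" "v' \<in> V" "w' \<in> V"
  shows "polar (metabolic_form d q) (v, w) (v', w') = polar d v v' + polar q v w' + polar q v' w"
proof -
  have "polar q (v + v') (w + w') = polar q v w + polar q v w' + polar q v' w + polar q v' w'"
    using assms by (simp add: polar_add_left[OF Q] polar_add_right[OF Q] f2space_add
        quadratic_form_f2space add_ac)
  then show ?thesis
    by (simp add: metabolic_form_def polar_def add_ac)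
qed

lemma quad_space_metabolic_form:
  assumes V: "quad_space V q" and D: "quadratic_form V d"
  shows "quad_space (V \<times> V) (metabolic_form d q)"
proof -
  have Q: "quadratic_form V q" and F: "f2space V"
    using V quad_space_quadratic_form quadratic_form_f2space by blast+
  note polar_expand = polar_metabolic_form[OF Q] polar_add_left[OF Q] polar_add_right[OF Q]
    polar_add_left[OF D] polar_add_right[OF D] f2space_add[OF F]
  show ?thesis
    unfolding quad_space_def quadratic_form_def nondegenerate_def
  proof (intro conjI ballI impI)
    show "f2space (V \<times> V)"
      by (intro f2space_Times F)
  next
    fix x y z assume "x \<in> V \<times> V" "y \<in> V \<times> V" "z \<in> V \<times> V"
    then show "polar (metabolic_form d q) (x + y) z =
        polar (metabolic_form d q) x z + polar (metabolic_form d q) y z"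
      and "polar (metabolic_form d q) x (y + z) =
        polar (metabolic_form d q) x y + polar (metabolic_form d q) x z"
      by (auto simp: polar_expand add_ac)
  next
    fix x assume "x \<in> V \<times> V" and radical: "\<forall>y\<in>V \<times> V. polar (metabolic_form d q) x y = 0"
    then obtain v w where x: "x = (v, w)" and v: "v \<in> V" and w: "w \<in> V"
      by blast
    have q0: "q 0 = 0" and d0: "d 0 = 0" and V0: "0 \<in> V"
      using quadratic_form_zero[OF Q] quadratic_form_zero[OF D] f2space_zero[OF F] .
    have "polar q v w' = 0" if "w' \<in> V" for w'
      using radical[rule_format, of "(0, w')"] that v w V0 q0 d0 by (simp add: x polar_expand)
    then have v0: "v = 0"
      by (rule quad_space_nondegenerate[OF V v])
    have "polar q w v' = 0" if "v' \<in> V" for v'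
      using radical[rule_format, of "(v', 0)"] that w V0 q0 d0
      by (simp add: x v0 polar_expand polar_commute)
    then have "w = 0"
      by (rule quad_space_nondegenerate[OF V w])
    then show "x = 0"
      by (simp add: x v0 zero_prod_def)
  qed
qed

lemma Eq_morphism_into_metabolic_form:
  "quadratic_form V q \<Longrightarrow> Eq_morphism V d (V \<times> V) (metabolic_form d q) (\<lambda>v. (v, 0))"
  by (simp add: Eq_morphism_def f2linear_def metabolic_form_def quadratic_form_zero
      quadratic_form_f2space f2space_zero)

lemma Eq_morphism_comp:
  "Eq_morphism S q T r f \<Longrightarrow> Eq_morphism T r U s g \<Longrightarrow> Eq_morphism S q U s (\<lambda>x. g (f x))"
  by (simp add: Eq_morphism_def f2linear_def)

lemma Eq_morphism_graph:
  assumes "f2linear V W f" "Eq_morphism V (\<lambda>v. qV v + qW (f v)) Y qY g"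
  shows "Eq_morphism V qV (W \<times> Y) (orth_form qW qY) (\<lambda>v. (f v, g v))"
  using assms by (simp add: Eq_morphism_def f2linear_def orth_form_def add_ac)

lemma Eq_morphism_orth_inclusion:
  "quadratic_form Y qY \<Longrightarrow> Eq_morphism W qW (W \<times> Y) (orth_form qW qY) (\<lambda>w. (w, 0))"
  by (simp add: Eq_morphism_def f2linear_def orth_form_def quadratic_form_zero
      quadratic_form_f2space f2space_zero)

lemma polar_orth_form:
  "polar (orth_form qW qY) (w, y) (w', y') = polar qW w w' + polar qY y y'"
  by (simp add: polar_def orth_form_def add_ac)

lemma proj_g_orth_inclusion:
  assumes W: "quad_space W qW" and "qY 0 = 0" and "w \<in> W"
  shows "proj_g (orth_form qW qY) W (\<lambda>u. (u, 0)) (w, y) = w"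
  unfolding proj_g_def
proof (rule the_equality)
  have "qW 0 = 0"
    using W by (intro quadratic_form_zero quad_space_quadratic_form)
  then show "w \<in> W \<and> (\<forall>u\<in>W. polar (orth_form qW qY) ((w, y) - (w, 0)) (u, 0) = 0)"
    using assms by (simp add: polar_orth_form)
next
  fix w' assume w': "w' \<in> W \<and> (\<forall>u\<in>W. polar (orth_form qW qY) ((w, y) - (w', 0)) (u, 0) = 0)"
  have F: "f2space W"
    using W by (intro quadratic_form_f2space quad_space_quadratic_form)
  have "w - w' \<in> W"
    using F assms(3) w' by (blast intro: f2space_diff)
  moreover have "polar qW (w - w') u = 0" if "u \<in> W" for u
    using w' that assms(2) by (simp add: polar_orth_form)
  ultimately have "w - w' = 0"
    by (rule quad_space_nondegenerate[OF W])
  then show "w' = w"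
    by simp
qed

theorem mainTheorem2:
  fixes V :: "'v::ab_group_add set" and qV :: "'v \<Rightarrow> bit"
    and W :: "'w::ab_group_add set" and qW :: "'w \<Rightarrow> bit"
    and f :: "'v \<Rightarrow> 'w"
  assumes "quad_space V qV" and "quad_space W qW" and "f2linear V W f"
  shows "\<exists>(Y :: (nat \<Rightarrow> bit) set) (qY :: (nat \<Rightarrow> bit) \<Rightarrow> bit) (\<phi> :: 'v \<Rightarrow> 'w \<times> (nat \<Rightarrow> bit)).
           quad_space Y qY \<and>
           Eq_morphism V qV (W \<times> Y) (orth_form qW qY) \<phi> \<and>
           Eq_morphism W qW (W \<times> Y) (orth_form qW qY) (\<lambda>w. (w, 0)) \<and>
           (\<forall>v\<in>V. eps_rep (orth_form qW qY) W \<phi> (\<lambda>w. (w, 0)) v = f v)"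
proof -
  define d where "d = (\<lambda>v. qV v + qW (f v))"
  have QV: "quadratic_form V qV" and QW: "quadratic_form W qW"
    using assms(1,2) by (simp_all add: quad_space_quadratic_form)
  have "quadratic_form V d"
    unfolding d_def using quadratic_form_comp_f2linear[OF QW quadratic_form_f2space[OF QV] assms(3)]
    by (rule quadratic_form_plus[OF QV])
  then have "quad_space (V \<times> V) (metabolic_form d qV)"
    by (rule quad_space_metabolic_form[OF assms(1)])
  then obtain Y :: "(nat \<Rightarrow> bit) set" and qY \<iota>
    where Y: "quad_space Y qY" and \<iota>: "Eq_morphism (V \<times> V) (metabolic_form d qV) Y qY \<iota>"
    using quad_space_embedding_nat_bit by blast
  have "Eq_morphism V qV (W \<times> Y) (orth_form qW qY) (\<lambda>v. (f v, \<iota> (v, 0)))"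
    using Eq_morphism_comp[OF Eq_morphism_into_metabolic_form[OF QV] \<iota>]
    by (intro Eq_morphism_graph assms(3)) (simp add: d_def)
  moreover have QY: "quadratic_form Y qY"
    using Y by (rule quad_space_quadratic_form)
  moreover have "\<forall>v\<in>V. eps_rep (orth_form qW qY) W (\<lambda>v. (f v, \<iota> (v, 0))) (\<lambda>w. (w, 0)) v = f v"
    using assms(2,3) quadratic_form_zero[OF QY]
    by (simp add: eps_rep_def proj_g_orth_inclusion f2linear_mem)
  ultimately show ?thesis
    using Y Eq_morphism_orth_inclusion by blast
qed

end
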